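(* Let $p\ge 7$ be a prime. Then $$\sum_{k=1}^{p-1}\frac{H_k^2}{k^2}\equiv 0,\qquad \sum_{k=1}^{p-1}\frac{H_k H_{k,2}}{k}\equiv 0,\qquad \sum_{k=1}^{p-1}\frac{H_k^3}{k}\equiv 0\pmod{p}.$$
   Context: For positive integers $n,m$, $H_{n,m}=\sum_{k=1}^n 1/k^m$ and $H_n=H_{n,1}$. Congruences modulo $p$ are taken in the ring of rationals with denominators not divisible by $p$. *)

theory Defs
  imports "HOL-Number_Theory.Number_Theory"
begin

definition harm :: "nat \<Rightarrow> nat \<Rightarrow> rat" where
  "harm n m = (\<Sum>k=1..n. 1 / (of_nat k) ^ m)"

definition p_integral :: "nat \<Rightarrow> rat \<Rightarrow> bool" where
  "p_integral p x = (\<not> int p dvd snd (quotient_of x))"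

definition rat_cong :: "rat \<Rightarrow> rat \<Rightarrow> nat \<Rightarrow> bool" where
  "rat_cong x y p = (\<exists>z. p_integral p z \<and> x - y = of_nat p * z)"

end

theory Submission
  imports Defs
begin

text \<open>
  Write \<open>H = H(k,1)\<close> and let all sums run over \<open>1 \<le> k \<le> p-1\<close>.  The three sums
  of the theorem are tied to the auxiliary sums \<open>A = \<Sum> H/k^3\<close>, \<open>B = \<Sum> H(k,3)/k\<close>,
  \<open>Q = \<Sum> H(k,2)/k^2\<close> and \<open>G = \<Sum> (H^2 + H(k,2))/(2k^2)\<close> by exact telescoping
  identities (summation by parts), whose boundary terms are polynomials in the
  \<open>H(p-1,m)\<close>, \<open>1 \<le> m \<le> 4\<close>.  Modulo p:
  \<^item> \<open>H(p-1,m) \<equiv> 0\<close> for \<open>1 \<le> m \<le> 4\<close>, since inversion mod p permutes the residues and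
    turns \<open>H(p-1,m)\<close> into the power sum \<open>\<Sum> k^m\<close>, divisible by p by Faulhaber's formulas;
  \<^item> \<open>A \<equiv> 0\<close> by the reflection \<open>k \<mapsto> p-k\<close>, under which \<open>H(p-k) \<equiv> H(k-1)\<close>;
  \<^item> \<open>G \<equiv> -B\<close>, because the binomial transform \<open>\<Sum> (-1)^(k-1) C(n,k) f(k)\<close> of the
    summand of \<open>G\<close> is exactly \<open>\<Sum>_{m \<le> n} H(m,3)/m\<close>, while \<open>(-1)^k C(p-1,k) \<equiv> 1\<close>.
  Solving the resulting linear system (only 2 and 4 need to be inverted, which is
  where \<open>p \<ge> 7\<close> enters together with the denominators 6 and 30 of Faulhaber's
  formulas) gives the three congruences.
\<close>

section \<open>Exact identities for harmonic numbers\<close>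

lemma harm_0 [simp]: "harm 0 m = 0"
  by (simp add: harm_def)

lemma harm_Suc: "harm (Suc n) m = harm n m + inverse (of_nat (Suc n)) ^ m"
  by (simp add: harm_def power_one_over inverse_eq_divide)

text \<open>Normal form used in the telescoping steps: division by \<open>(j+1)^m\<close> becomes
  multiplication by \<open>(1/(j+1))^m\<close>, the same quantity that \<open>harm_Suc\<close> adds.\<close>
lemma divide_Suc_power: "(a :: rat) / of_nat (Suc n) ^ m = a * inverse (of_nat (Suc n)) ^ m"
  by (simp add: divide_inverse power_inverse)

lemma sum_telescope:
  fixes F :: "nat \<Rightarrow> 'a :: ab_group_add"
  assumes "\<And>k. g (Suc k) = F (Suc k) - F k"
  shows "(\<Sum>k=1..n. g k) = F n - F 0"
  by (induction n) (simp_all add: assms)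

text \<open>The following summation identities are discrete analogues of
  \<open>d(H^2 + H_2) = 2 H dH\<close> etc.: in each case the summand is the increment of the
  right-hand side from \<open>k-1\<close> to \<open>k\<close>, which is a polynomial identity in \<open>H(k-1,j)\<close>
  and \<open>y = 1/k\<close> once \<open>1/k\<close> is treated as an independent variable.\<close>
lemma sum_harm_div: "2 * (\<Sum>k=1..n. harm k 1 / of_nat k) = harm n 1 ^ 2 + harm n 2"
proof -
  have "(\<Sum>k=1..n. 2 * (harm k 1 / of_nat k))
      = (harm n 1 ^ 2 + harm n 2) - (harm 0 1 ^ 2 + harm 0 2)"
  proof (rule sum_telescope)
    fix j
    obtain y :: rat where y: "inverse (of_nat (Suc j)) = y" by blast
    show "2 * (harm (Suc j) 1 / of_nat (Suc j))
        = (harm (Suc j) 1 ^ 2 + harm (Suc j) 2) - (harm j 1 ^ 2 + harm j 2)"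
      unfolding divide_Suc_power unfolding divide_inverse harm_Suc y
      by (simp add: eval_nat_numeral algebra_simps)
  qed
  then show ?thesis by (simp add: sum_distrib_left)
qed

lemma sum_harm2_div2: "2 * (\<Sum>k=1..n. harm k 2 / of_nat k ^ 2) = harm n 2 ^ 2 + harm n 4"
proof -
  have "(\<Sum>k=1..n. 2 * (harm k 2 / of_nat k ^ 2))
      = (harm n 2 ^ 2 + harm n 4) - (harm 0 2 ^ 2 + harm 0 4)"
  proof (rule sum_telescope)
    fix j
    obtain y :: rat where y: "inverse (of_nat (Suc j)) = y" by blast
    show "2 * (harm (Suc j) 2 / of_nat (Suc j) ^ 2)
        = (harm (Suc j) 2 ^ 2 + harm (Suc j) 4) - (harm j 2 ^ 2 + harm j 4)"
      unfolding divide_Suc_power unfolding divide_inverse harm_Suc y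
      by (simp add: eval_nat_numeral algebra_simps)
  qed
  then show ?thesis by (simp add: sum_distrib_left)
qed

lemma sum_harm3_div:
  "(\<Sum>k=1..n. harm k 3 / of_nat k) + (\<Sum>k=1..n. harm k 1 / of_nat k ^ 3)
     = harm n 1 * harm n 3 + harm n 4"
proof -
  have "(\<Sum>k=1..n. harm k 3 / of_nat k + harm k 1 / of_nat k ^ 3)
      = (harm n 1 * harm n 3 + harm n 4) - (harm 0 1 * harm 0 3 + harm 0 4)"
  proof (rule sum_telescope)
    fix j
    obtain y :: rat where y: "inverse (of_nat (Suc j)) = y" by blast
    show "harm (Suc j) 3 / of_nat (Suc j) + harm (Suc j) 1 / of_nat (Suc j) ^ 3
        = (harm (Suc j) 1 * harm (Suc j) 3 + harm (Suc j) 4) - (harm j 1 * harm j 3 + harm j 4)"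
      unfolding divide_Suc_power unfolding divide_inverse harm_Suc y
      by (simp add: eval_nat_numeral algebra_simps)
  qed
  then show ?thesis by (simp add: sum.distrib)
qed

lemma sum_harm_harm2_div:
  "(\<Sum>k=1..n. harm k 1 ^ 2 / of_nat k ^ 2) + 2 * (\<Sum>k=1..n. harm k 1 * harm k 2 / of_nat k)
     - 2 * (\<Sum>k=1..n. harm k 1 / of_nat k ^ 3) - (\<Sum>k=1..n. harm k 2 / of_nat k ^ 2)
   = harm n 1 ^ 2 * harm n 2 - harm n 4"
proof -
  have "(\<Sum>k=1..n. harm k 1 ^ 2 / of_nat k ^ 2 + 2 * (harm k 1 * harm k 2 / of_nat k)
        - 2 * (harm k 1 / of_nat k ^ 3) - harm k 2 / of_nat k ^ 2)
      = (harm n 1 ^ 2 * harm n 2 - harm n 4) - (harm 0 1 ^ 2 * harm 0 2 - harm 0 4)"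
  proof (rule sum_telescope)
    fix j
    obtain y :: rat where y: "inverse (of_nat (Suc j)) = y" by blast
    show "harm (Suc j) 1 ^ 2 / of_nat (Suc j) ^ 2
          + 2 * (harm (Suc j) 1 * harm (Suc j) 2 / of_nat (Suc j))
          - 2 * (harm (Suc j) 1 / of_nat (Suc j) ^ 3) - harm (Suc j) 2 / of_nat (Suc j) ^ 2
        = (harm (Suc j) 1 ^ 2 * harm (Suc j) 2 - harm (Suc j) 4)
          - (harm j 1 ^ 2 * harm j 2 - harm j 4)"
      unfolding divide_Suc_power unfolding divide_inverse harm_Suc y
      by (simp add: eval_nat_numeral algebra_simps)
  qed
  then show ?thesis by (simp add: sum.distrib sum_subtractf sum_distrib_left)
qed

lemma sum_harm_cube_div:
  "4 * (\<Sum>k=1..n. harm k 1 ^ 3 / of_nat k) - 6 * (\<Sum>k=1..n. harm k 1 ^ 2 / of_nat k ^ 2)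
     + 4 * (\<Sum>k=1..n. harm k 1 / of_nat k ^ 3)
   = harm n 1 ^ 4 + harm n 4"
proof -
  have "(\<Sum>k=1..n. 4 * (harm k 1 ^ 3 / of_nat k) - 6 * (harm k 1 ^ 2 / of_nat k ^ 2)
        + 4 * (harm k 1 / of_nat k ^ 3))
      = (harm n 1 ^ 4 + harm n 4) - (harm 0 1 ^ 4 + harm 0 4)"
  proof (rule sum_telescope)
    fix j
    obtain y :: rat where y: "inverse (of_nat (Suc j)) = y" by blast
    show "4 * (harm (Suc j) 1 ^ 3 / of_nat (Suc j)) - 6 * (harm (Suc j) 1 ^ 2 / of_nat (Suc j) ^ 2)
          + 4 * (harm (Suc j) 1 / of_nat (Suc j) ^ 3)
        = (harm (Suc j) 1 ^ 4 + harm (Suc j) 4) - (harm j 1 ^ 4 + harm j 4)"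
      unfolding divide_Suc_power unfolding divide_inverse harm_Suc y
      by (simp add: eval_nat_numeral algebra_simps)
  qed
  then show ?thesis by (simp add: sum.distrib sum_subtractf sum_distrib_left)
qed

lemma sum_harm_shifted_neg_cube:
  "(\<Sum>k=1..n. harm (k - 1) 1 * (- (1 / of_nat k)) ^ 3)
     = harm n 4 - (\<Sum>k=1..n. harm k 1 / of_nat k ^ 3)"
proof -
  have identity: "y * (- (1 / c)) ^ 3 = 1 / c ^ 4 - (y + inverse c ^ 1) / c ^ 3"
    if "c \<noteq> 0" for y c :: rat
    using that by (simp add: field_simps eval_nat_numeral)
  have "harm (k - 1) 1 * (- (1 / of_nat k)) ^ 3 = 1 / of_nat k ^ 4 - harm k 1 / of_nat k ^ 3"
    if k: "k \<in> {1..n}" for k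
  proof -
    obtain j where j: "k = Suc j" using k by (cases k) auto
    show ?thesis unfolding j harm_Suc diff_Suc_1 by (rule identity) simp
  qed
  then show ?thesis unfolding harm_def by (simp add: sum_subtractf)
qed

section \<open>The binomial transform\<close>

definition binomial_transform :: "(nat \<Rightarrow> 'a :: field_char_0) \<Rightarrow> nat \<Rightarrow> 'a" where
  "binomial_transform f n = (\<Sum>k=1..n. (-1) ^ (k - 1) * of_nat (n choose k) * f k)"

lemma binomial_transform_shift:
  "binomial_transform f n = (\<Sum>j=0..n. (-1) ^ j * of_nat (n choose Suc j) * f (Suc j))"
proof -
  have "binomial_transform f n = (\<Sum>k=Suc 0..Suc n. (-1) ^ (k - 1) * of_nat (n choose k) * f k)"
    unfolding binomial_transform_def by simp
  also have "\<dots> = (\<Sum>j=0..n. (-1) ^ j * of_nat (n choose Suc j) * f (Suc j))"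
    by (subst sum.shift_bounds_cl_Suc_ivl) simp
  finally show ?thesis .
qed

lemma binomial_transform_Suc_shift:
  "binomial_transform f (Suc n) = (\<Sum>j=0..n. (-1) ^ j * of_nat (Suc n choose Suc j) * f (Suc j))"
  unfolding binomial_transform_def by (simp only: One_nat_def sum.shift_bounds_cl_Suc_ivl) simp

text \<open>Pascal's rule splits the transform at \<open>n+1\<close> into the transform at \<open>n\<close> and a
  remainder.\<close>
lemma binomial_transform_Suc:
  "binomial_transform f (Suc n)
     = binomial_transform f n + (\<Sum>j=0..n. (-1) ^ j * of_nat (n choose j) * f (Suc j))"
proof -
  have "binomial_transform f (Suc n)
      = (\<Sum>j=0..n. (-1) ^ j * of_nat (Suc n choose Suc j) * f (Suc j))"
    by (rule binomial_transform_Suc_shift)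
  also have "\<dots> = (\<Sum>j=0..n. (-1) ^ j * of_nat (n choose Suc j) * f (Suc j)
                 + (-1) ^ j * of_nat (n choose j) * f (Suc j))"
    by (rule sum.cong) (simp_all add: algebra_simps)
  finally show ?thesis unfolding sum.distrib binomial_transform_shift[of f n] .
qed

text \<open>The remainder of a quotient by the index is again a binomial transform, by
  \<open>C(n,j)/(j+1) = C(n+1,j+1)/(n+1)\<close>.\<close>
lemma binomial_remainder_divide:
  "(\<Sum>j=0..n. (-1) ^ j * of_nat (n choose j) * (h (Suc j) / of_nat (Suc j)))
     = binomial_transform h (Suc n) / of_nat (Suc n)"
proof -
  have choose: "(of_nat (n choose j) :: 'a) / of_nat (Suc j)
      = of_nat (Suc n choose Suc j) / of_nat (Suc n)" for j
  proof -
    have "of_nat (Suc n) * (of_nat (n choose j) :: 'a) = of_nat (Suc n choose Suc j) * of_nat (Suc j)"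
      using Suc_times_binomial_eq[of n j] by (metis of_nat_mult)
    moreover have "(of_nat (Suc j) :: 'a) \<noteq> 0" "(of_nat (Suc n) :: 'a) \<noteq> 0"
      by (simp_all only: of_nat_neq_0 not_False_eq_True)
    ultimately show ?thesis by (metis frac_eq_eq mult.commute)
  qed
  have "(-1) ^ j * of_nat (n choose j) * (h (Suc j) / of_nat (Suc j))
      = (-1) ^ j * h (Suc j) * (of_nat (Suc n choose Suc j) / of_nat (Suc n))" for j
    unfolding choose[symmetric] by (simp add: mult_ac del: of_nat_Suc binomial_Suc_Suc)
  then have "(\<Sum>j=0..n. (-1) ^ j * of_nat (n choose j) * (h (Suc j) / of_nat (Suc j)))
      = (\<Sum>j=0..n. (-1) ^ j * of_nat (Suc n choose Suc j) * h (Suc j)) / of_nat (Suc n)"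
    unfolding sum_divide_distrib by (simp add: mult_ac del: of_nat_Suc binomial_Suc_Suc)
  then show ?thesis by (simp only: binomial_transform_Suc_shift)
qed

lemma binomial_transform_divide:
  "binomial_transform (\<lambda>k. f k / of_nat k) n = (\<Sum>m=1..n. binomial_transform f m / of_nat m)"
proof (induction n)
  case 0
  then show ?case by (simp add: binomial_transform_def)
next
  case (Suc n)
  have "binomial_transform (\<lambda>k. f k / of_nat k) (Suc n)
      = binomial_transform (\<lambda>k. f k / of_nat k) n + binomial_transform f (Suc n) / of_nat (Suc n)"
    unfolding binomial_transform_Suc binomial_remainder_divide ..
  then show ?case using Suc.IH by simp
qed

text \<open>Partial sums of quotients by the index: only the remainder term survives.\<close>
lemma binomial_transform_partial_sums:
  "binomial_transform (\<lambda>k. \<Sum>m=1..k. h m / of_nat m) (Suc n)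
     = binomial_transform h (Suc n) / of_nat (Suc n)"
proof -
  define F where "F = (\<lambda>k. \<Sum>m=1..k. h m / of_nat m)"
  have F_Suc: "F (Suc j) = F j + h (Suc j) / of_nat (Suc j)" for j
    unfolding F_def by simp
  have "(\<Sum>j=0..n. (-1) ^ j * of_nat (n choose j) * F j) = - binomial_transform F n"
  proof -
    have "(\<Sum>j=0..n. (-1) ^ j * of_nat (n choose j) * F j)
        = (\<Sum>j=Suc 0..n. (-1) ^ j * of_nat (n choose j) * F j)"
      by (subst sum.atLeast_Suc_atMost) (simp_all add: F_def)
    also have "\<dots> = (\<Sum>j=1..n. - ((-1) ^ (j - 1) * of_nat (n choose j) * F j))"
      by (rule sum.cong) (auto simp: not_less_eq_eq power_eq_if)
    finally show ?thesis unfolding binomial_transform_def by (simp add: sum_negf)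
  qed
  moreover have "(\<Sum>j=0..n. (-1) ^ j * of_nat (n choose j) * F (Suc j))
      = (\<Sum>j=0..n. (-1) ^ j * of_nat (n choose j) * F j)
        + (\<Sum>j=0..n. (-1) ^ j * of_nat (n choose j) * (h (Suc j) / of_nat (Suc j)))"
    unfolding F_Suc sum.distrib[symmetric] by (simp add: algebra_simps)
  ultimately have "binomial_transform F (Suc n) = binomial_transform h (Suc n) / of_nat (Suc n)"
    unfolding binomial_transform_Suc binomial_remainder_divide by simp
  then show ?thesis unfolding F_def .
qed

text \<open>The transform of the constant sequence 1 is 1, by the alternating binomial sum.\<close>
lemma binomial_transform_1: "binomial_transform (\<lambda>k. 1) (Suc n) = 1"
proof -
  have "(\<Sum>i=0..Suc n. (-1) ^ i * of_nat (Suc n choose i)) = (0 :: 'a)"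
    using choose_alternating_sum[of "Suc n"] by (simp add: atMost_atLeast0)
  then have "1 + (\<Sum>j=0..n. (-1) ^ Suc j * of_nat (Suc n choose Suc j)) = (0 :: 'a)"
    by (simp only: sum.atLeast0_atMost_Suc_shift) simp
  then show ?thesis
    unfolding binomial_transform_Suc_shift by (simp add: sum_negf)
qed

text \<open>The binomial transform of \<open>(H_k^2 + H(k,2)) / (2 k^2)\<close> is the sum of \<open>H(m,3)/m\<close>:
  repeatedly divide by the index, starting from \<open>T H (n+1) = 1/(n+1)\<close>.\<close>
lemma binomial_transform_harm_square:
  "binomial_transform (\<lambda>k. (harm k 1 ^ 2 + harm k 2) / 2 / of_nat k ^ 2) n
     = (\<Sum>m=1..n. harm m 3 / of_nat m)"
proof -
  define G where "G k = (harm k 1 ^ 2 + harm k 2) / 2" for k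
  have harm_1: "harm k 1 = (\<Sum>m=1..k. 1 / of_nat m)" for k
    unfolding harm_def by simp
  have T_harm: "binomial_transform (\<lambda>k. harm k 1) (Suc n) = 1 / of_nat (Suc n)" for n
    unfolding harm_1 using binomial_transform_partial_sums[of "\<lambda>_. 1" n]
    by (simp add: binomial_transform_1)
  have G_sums: "G k = (\<Sum>m=1..k. harm m 1 / of_nat m)" for k
    using sum_harm_div[of k] unfolding G_def by simp
  have T_G: "binomial_transform G (Suc n) = 1 / of_nat (Suc n) ^ 2" for n
    unfolding G_sums binomial_transform_partial_sums T_harm by (simp add: power2_eq_square)
  have T_G_div: "binomial_transform (\<lambda>k. G k / of_nat k) n = harm n 3" for n
  proof -
    have "binomial_transform (\<lambda>k. G k / of_nat k) n
        = (\<Sum>m=1..n. binomial_transform G m / of_nat m)"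
      by (rule binomial_transform_divide)
    also have "\<dots> = (\<Sum>m=1..n. 1 / of_nat m ^ 3)"
    proof (rule sum.cong)
      fix m assume "m \<in> {1..n}"
      then obtain i where m: "m = Suc i" by (cases m) auto
      show "binomial_transform G m / of_nat m = 1 / of_nat m ^ 3"
        unfolding m T_G by (simp add: power2_eq_square power3_eq_cube)
    qed simp
    finally show ?thesis unfolding harm_def .
  qed
  have "binomial_transform (\<lambda>k. G k / of_nat k ^ 2) n
      = binomial_transform (\<lambda>k. G k / of_nat k / of_nat k) n"
    by (simp add: power2_eq_square)
  also have "\<dots> = (\<Sum>m=1..n. binomial_transform (\<lambda>k. G k / of_nat k) m / of_nat m)"
    by (rule binomial_transform_divide)
  finally have "binomial_transform (\<lambda>k. G k / of_nat k ^ 2) n = (\<Sum>m=1..n. harm m 3 / of_nat m)"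
    unfolding T_G_div .
  then show ?thesis unfolding G_def .
qed

section \<open>Power sums\<close>

lemma power_sum_1: "2 * (\<Sum>k=1..n. int k) = int n * (int n + 1)"
  by (induction n) (auto simp: algebra_simps)

lemma power_sum_2: "6 * (\<Sum>k=1..n. int k ^ 2) = int n * (int n + 1) * (2 * int n + 1)"
  by (induction n) (auto simp: algebra_simps power2_eq_square)

lemma power_sum_3: "4 * (\<Sum>k=1..n. int k ^ 3) = int n * (int n + 1) * (int n * (int n + 1))"
  by (induction n) (auto simp: algebra_simps power3_eq_cube)

lemma power_sum_4:
  "30 * (\<Sum>k=1..n. int k ^ 4)
     = int n * (int n + 1) * ((2 * int n + 1) * (3 * int n ^ 2 + 3 * int n - 1))"
  by (induction n) (auto simp: algebra_simps power2_eq_square power3_eq_cube power4_eq_xxxx)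

section \<open>p-integral rationals and congruences modulo p\<close>

definition residue_inverse :: "nat \<Rightarrow> nat \<Rightarrow> nat" where
  "residue_inverse p k = nat (modular_inverse (int p) (int k))"

context
  fixes p :: nat
  assumes prime_p: "prime p"
begin

text \<open>A rational is p-integral iff it can be written as a fraction whose denominator
  is prime to p; this frees us from working with reduced representations.\<close>
lemma p_integral_iff_fraction:
  "p_integral p x \<longleftrightarrow> (\<exists>a b. \<not> int p dvd b \<and> x = of_int a / of_int b)"
proof
  assume "p_integral p x"
  then show "\<exists>a b. \<not> int p dvd b \<and> x = of_int a / of_int b"
    unfolding p_integral_def
    using quotient_of_div[of x "fst (quotient_of x)" "snd (quotient_of x)"] by auto
next
  assume "\<exists>a b. \<not> int p dvd b \<and> x = of_int a / of_int b"
  then obtain a b where b: "\<not> int p dvd b" and x: "x = of_int a / of_int b" by blast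
  obtain a' b' where q: "quotient_of x = (a', b')" by (cases "quotient_of x")
  have "b \<noteq> 0" "b' > 0" using b quotient_of_denom_pos[OF q] by auto
  moreover have "of_int a' / of_int b' = (of_int a / of_int b :: rat)"
    using x quotient_of_div[OF q] by simp
  ultimately have "a' * b = a * b'"
    by (simp add: field_simps flip: of_int_mult of_int_eq_iff)
  then have "b' dvd a' * b" by simp
  then have "b' dvd b"
    using quotient_of_coprime[OF q] by (simp add: coprime_commute coprime_dvd_mult_right_iff)
  then show "p_integral p x" using b dvd_trans unfolding p_integral_def q by auto
qed

lemma p_integral_fraction: "\<not> int p dvd b \<Longrightarrow> p_integral p (of_int a / of_int b)"
  using p_integral_iff_fraction by blast

lemma p_integral_of_int [simp]: "p_integral p (of_int a)"
  using p_integral_fraction[of 1 a] prime_gt_1_nat[OF prime_p] by simp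

lemma p_integral_of_nat [simp]: "p_integral p (of_nat a)"
  using p_integral_of_int[of "int a"] by simp

lemma p_integral_0 [simp]: "p_integral p 0" and p_integral_1 [simp]: "p_integral p 1"
  using p_integral_of_int[of 0] p_integral_of_int[of 1] by simp_all

text \<open>The p-integral rationals form a subring of \<open>\<rat>\<close>: the product of two
  denominators prime to p is again prime to p.\<close>
lemma p_integral_add_mult:
  assumes "p_integral p x" "p_integral p y"
  shows "p_integral p (x + y)" "p_integral p (x * y)"
proof -
  obtain a b c d where b: "\<not> int p dvd b" "x = of_int a / of_int b"
    and d: "\<not> int p dvd d" "y = of_int c / of_int d"
    using assms p_integral_iff_fraction by meson
  have bd: "\<not> int p dvd b * d"
    using b d prime_p by (simp add: prime_dvd_mult_iff)
  moreover have "b \<noteq> 0" "d \<noteq> 0" using b d by auto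
  ultimately show "p_integral p (x + y)" "p_integral p (x * y)"
    using p_integral_fraction[OF bd, of "a * d + c * b"] p_integral_fraction[OF bd, of "a * c"]
    by (simp_all add: b d field_simps)
qed

lemmas p_integral_add = p_integral_add_mult(1)
lemmas p_integral_mult = p_integral_add_mult(2)

lemma p_integral_minus: "p_integral p x \<Longrightarrow> p_integral p (- x)"
  using p_integral_mult[OF p_integral_of_int[of "-1"], of x] by simp

lemma p_integral_diff: "p_integral p x \<Longrightarrow> p_integral p y \<Longrightarrow> p_integral p (x - y)"
  using p_integral_add[of x "- y"] p_integral_minus[of y] by simp

lemma p_integral_power: "p_integral p x \<Longrightarrow> p_integral p (x ^ n)"
  by (induction n) (simp_all add: p_integral_mult)

lemma p_integral_sum:
  "(\<And>k. k \<in> A \<Longrightarrow> p_integral p (f k)) \<Longrightarrow> p_integral p (sum f A)"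
  by (induction A rule: infinite_finite_induct) (simp_all add: p_integral_add)

lemma p_integral_inverse_int: "\<not> int p dvd c \<Longrightarrow> p_integral p (1 / of_int c)"
  using p_integral_fraction[of c 1] by simp

lemma p_integral_inverse_nat: "0 < k \<Longrightarrow> k < p \<Longrightarrow> p_integral p (1 / of_nat k)"
  using p_integral_inverse_int[of "int k"] nat_dvd_not_less[of k p] by simp

lemma p_integral_divide_power:
  "p_integral p x \<Longrightarrow> 0 < k \<Longrightarrow> k < p \<Longrightarrow> p_integral p (x / of_nat k ^ m)"
  using p_integral_mult[OF _ p_integral_power[OF p_integral_inverse_nat], of x k m]
  by (simp add: power_one_over)

text \<open>Harmonic numbers below p only involve denominators prime to p.\<close>
lemma p_integral_harm: "k < p \<Longrightarrow> p_integral p (harm k m)"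
  unfolding harm_def using p_integral_divide_power[of 1]
  by (intro p_integral_sum) simp

lemma rat_cong_iff: "rat_cong x y p \<longleftrightarrow> p_integral p ((x - y) / of_nat p)"
proof -
  have "(of_nat p :: rat) \<noteq> 0" using prime_gt_0_nat[OF prime_p] by simp
  then have "x - y = of_nat p * z \<longleftrightarrow> z = (x - y) / of_nat p" for z
    by (auto simp: field_simps)
  then show ?thesis unfolding rat_cong_def by auto
qed

lemma rat_cong_refl [simp]: "rat_cong x x p"
  by (simp add: rat_cong_iff)

lemma rat_cong_sub_0: "rat_cong x y p \<longleftrightarrow> rat_cong (x - y) 0 p"
  by (simp add: rat_cong_iff)

lemma rat_cong_add: "rat_cong x y p \<Longrightarrow> rat_cong u v p \<Longrightarrow> rat_cong (x + u) (y + v) p"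
proof -
  have "(x + u - (y + v)) / of_nat p = (x - y) / of_nat p + (u - v) / of_nat p"
    by (simp add: add_divide_distrib diff_divide_distrib)
  then show "rat_cong x y p \<Longrightarrow> rat_cong u v p \<Longrightarrow> ?thesis"
    by (simp add: rat_cong_iff p_integral_add)
qed

lemma rat_cong_diff: "rat_cong x y p \<Longrightarrow> rat_cong u v p \<Longrightarrow> rat_cong (x - u) (y - v) p"
proof -
  have "(x - u - (y - v)) / of_nat p = (x - y) / of_nat p - (u - v) / of_nat p"
    by (simp add: diff_divide_distrib)
  then show "rat_cong x y p \<Longrightarrow> rat_cong u v p \<Longrightarrow> ?thesis"
    by (simp add: rat_cong_iff p_integral_diff)
qed

lemma rat_cong_trans: "rat_cong x y p \<Longrightarrow> rat_cong y z p \<Longrightarrow> rat_cong x z p"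
  using rat_cong_add[of x y y z] by (simp add: rat_cong_iff)

text \<open>Multiplication respects congruences of p-integral numbers, because
  \<open>x u - y v = (x - y) u + y (u - v)\<close>.\<close>
lemma rat_cong_mult:
  assumes "rat_cong x y p" "rat_cong u v p" "p_integral p y" "p_integral p u"
  shows "rat_cong (x * u) (y * v) p"
proof -
  have eq: "(x * u - y * v) / of_nat p = (x - y) / of_nat p * u + y * ((u - v) / of_nat p)"
    by (simp add: diff_divide_distrib algebra_simps)
  have "p_integral p ((x - y) / of_nat p * u + y * ((u - v) / of_nat p))"
    using assms unfolding rat_cong_iff by (intro p_integral_add p_integral_mult)
  then show ?thesis unfolding rat_cong_iff eq .
qed

lemma rat_cong_power:
  assumes "rat_cong x y p" "p_integral p x" "p_integral p y"
  shows "rat_cong (x ^ n) (y ^ n) p"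
proof (induction n)
  case (Suc n)
  then show ?case
    using rat_cong_mult[OF assms(1) Suc assms(3) p_integral_power[OF assms(2)]] by simp
qed simp

lemma rat_cong_sum:
  "(\<And>k. k \<in> A \<Longrightarrow> rat_cong (f k) (g k) p) \<Longrightarrow> rat_cong (sum f A) (sum g A) p"
  by (induction A rule: infinite_finite_induct) (simp_all add: rat_cong_add)

lemma rat_cong_0_add: "rat_cong a 0 p \<Longrightarrow> rat_cong b 0 p \<Longrightarrow> rat_cong (a + b) 0 p"
  using rat_cong_add[of a 0 b 0] by simp

lemma rat_cong_0_diff: "rat_cong a 0 p \<Longrightarrow> rat_cong b 0 p \<Longrightarrow> rat_cong (a - b) 0 p"
  using rat_cong_diff[of a 0 b 0] by simp

lemma rat_cong_0_mult:
  assumes "rat_cong a 0 p" "p_integral p c"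
  shows "rat_cong (c * a) 0 p" "rat_cong (a * c) 0 p"
  using assms p_integral_mult[of c "a / of_nat p"]
  by (simp_all add: rat_cong_iff mult.commute)

lemma rat_cong_0_power:
  assumes "rat_cong a 0 p" "p_integral p a" "0 < n"
  shows "rat_cong (a ^ n) 0 p"
  using rat_cong_power[OF assms(1,2) p_integral_0, of n] assms(3) by (simp add: zero_power)

lemma rat_cong_0_sum:
  "(\<And>k. k \<in> A \<Longrightarrow> rat_cong (f k) 0 p) \<Longrightarrow> rat_cong (sum f A) 0 p"
  using rat_cong_sum[of A f "\<lambda>_. 0"] by simp

lemma rat_cong_0_of_int: "int p dvd a \<Longrightarrow> rat_cong (of_int a) 0 p"
  unfolding rat_cong_def by (auto intro!: exI[of _ "of_int (a div int p)"])

lemma rat_cong_0_cancel: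
  assumes "rat_cong (of_int c * x) 0 p" "\<not> int p dvd c"
  shows "rat_cong x 0 p"
proof -
  have "c \<noteq> 0" using assms(2) by auto
  then have eq: "x / of_nat p = 1 / of_int c * (of_int c * x / of_nat p)" by simp
  have "p_integral p (1 / of_int c * (of_int c * x / of_nat p))"
    using assms unfolding rat_cong_iff diff_zero
    by (intro p_integral_mult p_integral_inverse_int)
  then show ?thesis unfolding rat_cong_iff diff_zero eq .
qed

lemma coprime_residue: "0 < k \<Longrightarrow> k < p \<Longrightarrow> coprime (int k) (int p)"
  using prime_imp_coprime[OF prime_p, of k] nat_dvd_not_less[of k p]
  by (simp add: coprime_commute)

lemma residue_inverse_int:
  assumes "0 < k" "k < p"
  shows "int (residue_inverse p k) = modular_inverse (int p) (int k)"
    and "0 < residue_inverse p k" "residue_inverse p k < p"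
proof -
  have "0 < modular_inverse (int p) (int k)" "modular_inverse (int p) (int k) < int p"
    using coprime_residue[OF assms] prime_gt_1_nat[OF prime_p]
    by (simp_all add: mult_modular_inverse_int_pos modular_inverse_int_less)
  then show "int (residue_inverse p k) = modular_inverse (int p) (int k)"
    and "0 < residue_inverse p k" "residue_inverse p k < p"
    unfolding residue_inverse_def by simp_all
qed

text \<open>Inversion modulo p is an involution, hence a permutation, of \<open>{1..p-1}\<close>.\<close>
lemma residue_inverse_permutes: "bij_betw (residue_inverse p) {1..p-1} {1..p-1}"
proof -
  have "residue_inverse p (residue_inverse p k) = k \<and> residue_inverse p k \<in> {1..p-1}"
    if "k \<in> {1..p-1}" for k
  proof -
    have k: "0 < k" "k < p" using that by auto
    have "modular_inverse (int p) (modular_inverse (int p) (int k)) = int k"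
      using k coprime_residue[OF k] by (intro modular_inverse_int_eqI cong_modular_inverse2) auto
    then have "residue_inverse p (residue_inverse p k) = k"
      unfolding residue_inverse_def[of p "residue_inverse p k"] residue_inverse_int(1)[OF k]
      by simp
    moreover have "residue_inverse p k \<in> {1..p-1}"
      using residue_inverse_int(2,3)[OF k] by simp
    ultimately show ?thesis ..
  qed
  then have involution: "\<forall>k\<in>{1..p-1}. residue_inverse p (residue_inverse p k) = k"
    and image: "residue_inverse p ` {1..p-1} \<subseteq> {1..p-1}"
    by auto
  show ?thesis using bij_betw_byWitness[OF involution involution image image] .
qed

lemma reciprocal_cong_residue_inverse:
  assumes "0 < k" "k < p"
  shows "rat_cong (1 / of_nat k ^ m) (of_nat (residue_inverse p k) ^ m) p"
proof -
  define i where "i = int (residue_inverse p k)"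
  have "[(int k * i) ^ m = 1 ^ m] (mod int p)"
    unfolding i_def residue_inverse_int(1)[OF assms] using coprime_residue[OF assms]
    by (intro cong_pow cong_modular_inverse1)
  then have "int p dvd 1 - (int k * i) ^ m"
    by (simp add: cong_iff_dvd_diff dvd_diff_commute)
  then have "rat_cong (of_int (1 - (int k * i) ^ m) * (1 / of_nat k ^ m)) 0 p"
    using assms by (intro rat_cong_0_mult rat_cong_0_of_int p_integral_divide_power p_integral_1)
  moreover have "of_int (1 - (int k * i) ^ m) * (1 / of_nat k ^ m)
      = 1 / of_nat k ^ m - (of_int i ^ m :: rat)"
  proof -
    have "(of_nat k :: rat) ^ m \<noteq> 0" using assms by simp
    then have "(1 - of_nat k ^ m * b) * (1 / of_nat k ^ m) = 1 / of_nat k ^ m - b" for b :: rat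
      by (simp add: field_simps)
    then show ?thesis by (simp add: power_mult_distrib)
  qed
  ultimately show ?thesis
    unfolding i_def by (subst rat_cong_sub_0) simp
qed

lemma harm_cong_power_sum:
  "rat_cong (harm (p - 1) m) (of_int (\<Sum>k=1..p-1. int k ^ m)) p"
proof -
  have "rat_cong (harm (p - 1) m) (\<Sum>k=1..p-1. of_nat (residue_inverse p k) ^ m) p"
    unfolding harm_def by (intro rat_cong_sum reciprocal_cong_residue_inverse) auto
  also have "(\<Sum>k=1..p-1. of_nat (residue_inverse p k) ^ m) = (\<Sum>k=1..p-1. of_nat k ^ m :: rat)"
    using residue_inverse_permutes by (rule sum.reindex_bij_betw)
  finally show ?thesis by simp
qed

text \<open>\<open>(-1)^k C(p-1,k) \<equiv> 1 (mod p)\<close> for \<open>k \<le> p-1\<close>, by Pascal's rule and \<open>p | C(p,k)\<close>.\<close>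
lemma binomial_p_minus_1_cong: "k \<le> p - 1 \<Longrightarrow> int p dvd (-1) ^ k * int (p - 1 choose k) - 1"
proof (induction k)
  case (Suc k)
  have "p choose Suc k = (p - 1 choose k) + (p - 1 choose Suc k)"
    using binomial_Suc_Suc[of "p - 1" k] prime_gt_0_nat[OF prime_p] by simp
  then have "(-1) ^ Suc k * int (p - 1 choose Suc k) - 1
      = (-1) ^ Suc k * int (p choose Suc k) + ((-1) ^ k * int (p - 1 choose k) - 1)"
    by (simp add: algebra_simps)
  moreover have "p dvd (p choose Suc k)"
    using Suc.prems by (intro dvd_choose_prime[OF _ _ _ prime_p]) auto
  then have "int p dvd (-1) ^ Suc k * int (p choose Suc k)"
    by simp
  ultimately show ?case
    using Suc by (simp only: dvd_add)
qed simp

lemma binomial_transform_cong: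
  assumes "\<And>k. k \<in> {1..p-1} \<Longrightarrow> p_integral p (f k)"
  shows "rat_cong (binomial_transform f (p - 1) + (\<Sum>k=1..p-1. f k)) 0 p"
proof -
  have "binomial_transform f (p - 1) + (\<Sum>k=1..p-1. f k)
      = (\<Sum>k=1..p-1. of_int (1 - (-1) ^ k * int (p - 1 choose k)) * f k)"
    unfolding binomial_transform_def sum.distrib[symmetric]
  proof (rule sum.cong)
    fix k assume "k \<in> {1..p-1}"
    then obtain i where "k = Suc i" by (cases k) auto
    then show "(-1) ^ (k - 1) * of_nat (p - 1 choose k) * f k + f k
        = of_int (1 - (-1) ^ k * int (p - 1 choose k)) * f k"
      by (simp add: algebra_simps)
  qed simp
  moreover have "rat_cong (\<Sum>k=1..p-1. of_int (1 - (-1) ^ k * int (p - 1 choose k)) * f k) 0 p"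
  proof (rule rat_cong_0_sum)
    fix k assume k: "k \<in> {1..p-1}"
    then have "int p dvd 1 - (-1) ^ k * int (p - 1 choose k)"
      using binomial_p_minus_1_cong[of k] by (simp add: dvd_diff_commute)
    then show "rat_cong (of_int (1 - (-1) ^ k * int (p - 1 choose k)) * f k) 0 p"
      using assms[OF k] by (intro rat_cong_0_mult rat_cong_0_of_int)
  qed
  ultimately show ?thesis by simp
qed

lemma reciprocal_reflect:
  assumes "0 < m" "m < p"
  shows "rat_cong (1 / of_nat (p - m)) (- (1 / of_nat m)) p"
proof -
  have "1 / of_nat (p - m) - (- (1 / of_nat m)) = of_nat p * (1 / of_nat (p - m) * (1 / (of_nat m :: rat)))"
    using assms by (simp add: field_simps)
  moreover have "p_integral p (1 / of_nat (p - m) * (1 / of_nat m))"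
    using assms by (intro p_integral_mult p_integral_inverse_nat) auto
  ultimately show ?thesis unfolding rat_cong_def by blast
qed

end

section \<open>Congruences for primes p \<ge> 7\<close>

context
  fixes p :: nat
  assumes prime_p: "prime p" and p_ge_7: "p \<ge> 7"
begin

text \<open>A prime \<open>p \<ge> 7\<close> divides no product of the primes 2, 3 and 5; in particular
  the denominators 2, 4, 6, 30 of Faulhaber's formulas are units modulo p.\<close>
lemma not_dvd_2_3_5: "\<not> int p dvd 2 ^ a * 3 ^ b * 5 ^ c"
proof
  assume "int p dvd 2 ^ a * 3 ^ b * 5 ^ c"
  moreover have prime_int: "prime (int p)" using prime_p by simp
  ultimately have "int p dvd 2 ^ a \<or> int p dvd 3 ^ b \<or> int p dvd 5 ^ c"
    by (simp add: prime_dvd_mult_iff)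
  then have "int p dvd 2 \<or> int p dvd 3 \<or> int p dvd 5"
    using prime_dvd_power[OF prime_int] by blast
  then show False using p_ge_7 by (auto dest: zdvd_imp_le)
qed

lemma not_dvd_denominators: "c \<in> {2, 4, 6, 30} \<Longrightarrow> \<not> int p dvd c"
  using not_dvd_2_3_5[of 1 0 0] not_dvd_2_3_5[of 2 0 0] not_dvd_2_3_5[of 1 1 0]
    not_dvd_2_3_5[of 1 1 1]
  by auto

lemma not_dvd_2: "\<not> int p dvd 2"
  using not_dvd_denominators by simp

text \<open>Each power sum \<open>1^m + ... + (p-1)^m\<close> with \<open>1 \<le> m \<le> 4\<close> is divisible by p: its
  multiple by the denominator of Faulhaber's formula is a multiple of \<open>(p-1) p\<close>.\<close>
lemma power_sum_dvd:
  assumes "1 \<le> m" "m \<le> 4"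
  shows "int p dvd (\<Sum>k=1..p-1. int k ^ m)"
proof -
  define n where "n = int (p - 1)"
  define S where "S = (\<Sum>k=1..p-1. int k ^ m)"
  have np: "int (p - 1) + 1 = int p" using p_ge_7 by simp
  have "\<exists>c R. c \<in> {2, 4, 6, 30} \<and> c * S = int p * R"
  proof -
    have "m = 1 \<or> m = 2 \<or> m = 3 \<or> m = 4" using assms by auto
    then show ?thesis
    proof (elim disjE)
      assume "m = 1" then show ?thesis
        using power_sum_1[of "p - 1"] unfolding S_def np
        by (intro exI[of _ 2] exI[of _ n]) (simp add: n_def mult.commute)
    next
      assume "m = 2" then show ?thesis
        using power_sum_2[of "p - 1"] unfolding S_def np
        by (intro exI[of _ 6] exI[of _ "n * (2 * n + 1)"]) (simp add: n_def algebra_simps)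
    next
      assume "m = 3" then show ?thesis
        using power_sum_3[of "p - 1"] unfolding S_def np
        by (intro exI[of _ 4] exI[of _ "n * (n * int p)"]) (simp add: n_def algebra_simps)
    next
      assume "m = 4" then show ?thesis
        using power_sum_4[of "p - 1"] unfolding S_def np
        by (intro exI[of _ 30] exI[of _ "n * ((2 * n + 1) * (3 * n ^ 2 + 3 * n - 1))"])
          (simp add: n_def algebra_simps)
    qed
  qed
  then obtain c R where "c \<in> {2, 4, 6, 30}" "c * S = int p * R" by blast
  then show ?thesis
    using not_dvd_denominators prime_p unfolding S_def
    by (metis dvd_triv_left prime_dvd_mult_iff prime_nat_int_transfer)
qed

lemma harm_p_minus_1_cong_0:
  assumes "1 \<le> m" "m \<le> 4"
  shows "rat_cong (harm (p - 1) m) 0 p"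
  using rat_cong_trans[OF prime_p harm_cong_power_sum[OF prime_p]
      rat_cong_0_of_int[OF prime_p power_sum_dvd[OF assms]]] .

text \<open>Reflection of harmonic numbers: \<open>H(p-1-j) \<equiv> H(j)\<close>, since
  \<open>H(p-1) \<equiv> 0\<close> and \<open>1/(p-m) \<equiv> -1/m\<close>.\<close>
lemma harm_reflect: "j < p - 1 \<Longrightarrow> rat_cong (harm (p - Suc j) 1) (harm j 1) p"
proof (induction j)
  case 0
  then show ?case using harm_p_minus_1_cong_0[of 1] by simp
next
  case (Suc j)
  have p_Suc: "p - Suc j = Suc (p - Suc (Suc j))" using Suc.prems by simp
  have "rat_cong (harm (p - Suc j) 1 - 1 / of_nat (p - Suc j))
      (harm j 1 - (- (1 / of_nat (Suc j)))) p"
    using Suc by (intro rat_cong_diff[OF prime_p] reciprocal_reflect[OF prime_p]) auto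
  moreover have "harm (p - Suc (Suc j)) 1 = harm (p - Suc j) 1 - 1 / of_nat (p - Suc j)"
    unfolding p_Suc harm_Suc by (simp add: inverse_eq_divide)
  moreover have "harm j 1 - (- (1 / of_nat (Suc j))) = harm (Suc j) 1"
    unfolding harm_Suc by (simp add: inverse_eq_divide)
  ultimately show ?case by simp
qed

lemma sum_harm_div_cube_reflect:
  "rat_cong (\<Sum>k=1..p-1. harm k 1 / of_nat k ^ 3)
     (\<Sum>k=1..p-1. harm (k - 1) 1 * (- (1 / of_nat k)) ^ 3) p"
proof -
  have "(\<Sum>k=1..p-1. harm k 1 / of_nat k ^ 3)
      = (\<Sum>k=1..p-1. harm (p - k) 1 * (1 / of_nat (p - k)) ^ 3)"
    using p_ge_7 by (subst sum.atLeastAtMost_rev) (simp add: power_one_over)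
  moreover have "rat_cong (\<Sum>k=1..p-1. harm (p - k) 1 * (1 / of_nat (p - k)) ^ 3)
      (\<Sum>k=1..p-1. harm (k - 1) 1 * (- (1 / of_nat k)) ^ 3) p"
  proof (rule rat_cong_sum[OF prime_p])
    fix k assume k: "k \<in> {1..p-1}"
    then obtain j where j: "k = Suc j" "j < p - 1" by (cases k) auto
    have k': "0 < k" "k < p" using k by auto
    have "rat_cong (harm (p - k) 1) (harm (k - 1) 1) p"
      using harm_reflect[OF j(2)] j by simp
    moreover have "rat_cong ((1 / of_nat (p - k)) ^ 3) ((- (1 / of_nat k)) ^ 3) p"
      using k' reciprocal_reflect[OF prime_p k']
      by (intro rat_cong_power[OF prime_p] p_integral_inverse_nat[OF prime_p]
          p_integral_minus[OF prime_p]) auto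
    ultimately show "rat_cong (harm (p - k) 1 * (1 / of_nat (p - k)) ^ 3)
        (harm (k - 1) 1 * (- (1 / of_nat k)) ^ 3) p"
      using k' by (intro rat_cong_mult[OF prime_p] p_integral_harm[OF prime_p]
          p_integral_power[OF prime_p] p_integral_inverse_nat[OF prime_p]) auto
  qed
  ultimately show ?thesis by simp
qed

text \<open>\<open>A = \<Sum> H_k/k^3 \<equiv> 0\<close>: by reflection \<open>A \<equiv> -(A - H(p-1,4))\<close>, so
  \<open>2A \<equiv> H(p-1,4) \<equiv> 0\<close>.\<close>
lemma sum_harm_div_cube_cong_0: "rat_cong (\<Sum>k=1..p-1. harm k 1 / of_nat k ^ 3) 0 p"
proof -
  define A where "A = (\<Sum>k=1..p-1. harm k 1 / (of_nat k :: rat) ^ 3)"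
  have "rat_cong A (harm (p - 1) 4 - A) p"
    using sum_harm_div_cube_reflect unfolding A_def sum_harm_shifted_neg_cube .
  then have "rat_cong (A - (harm (p - 1) 4 - A)) 0 p"
    using rat_cong_sub_0[OF prime_p] by blast
  then have "rat_cong (A - (harm (p - 1) 4 - A) + harm (p - 1) 4) 0 p"
    using harm_p_minus_1_cong_0[of 4] by (intro rat_cong_0_add[OF prime_p]) simp_all
  then have "rat_cong (of_int 2 * A) 0 p" by simp
  then show ?thesis
    unfolding A_def using not_dvd_2 by (rule rat_cong_0_cancel[OF prime_p])
qed

lemma p_integral_harm_p_minus_1: "p_integral p (harm (p - 1) m)"
  using p_ge_7 by (intro p_integral_harm[OF prime_p]) simp

lemma harm_p_minus_1_power_cong_0:
  "1 \<le> m \<Longrightarrow> m \<le> 4 \<Longrightarrow> 0 < n \<Longrightarrow> rat_cong (harm (p - 1) m ^ n) 0 p"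
  by (intro rat_cong_0_power[OF prime_p] harm_p_minus_1_cong_0 p_integral_harm_p_minus_1)

text \<open>\<open>\<Sum> H(k,3)/k \<equiv> 0\<close>, from \<open>\<Sum> H(k,3)/k + \<Sum> H_k/k^3 = H H(p-1,3) + H(p-1,4)\<close>.\<close>
lemma sum_harm3_div_cong_0: "rat_cong (\<Sum>k=1..p-1. harm k 3 / of_nat k) 0 p"
proof -
  define B where "B = (\<Sum>k=1..p-1. harm k 3 / (of_nat k :: rat))"
  define A where "A = (\<Sum>k=1..p-1. harm k 1 / (of_nat k :: rat) ^ 3)"
  have "B = harm (p - 1) 1 * harm (p - 1) 3 + harm (p - 1) 4 - A"
    using sum_harm3_div[of "p - 1"] unfolding A_def B_def by simp
  moreover have "rat_cong (harm (p - 1) 1 * harm (p - 1) 3 + harm (p - 1) 4 - A) 0 p"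
    unfolding A_def
    by (intro rat_cong_0_diff[OF prime_p] rat_cong_0_add[OF prime_p] rat_cong_0_mult[OF prime_p]
        sum_harm_div_cube_cong_0 harm_p_minus_1_cong_0 p_integral_harm_p_minus_1) simp_all
  ultimately show ?thesis unfolding B_def by simp
qed

text \<open>\<open>\<Sum> H(k,2)/k^2 \<equiv> 0\<close>, from \<open>2 \<Sum> H(k,2)/k^2 = H(p-1,2)^2 + H(p-1,4)\<close>.\<close>
lemma sum_harm2_div2_cong_0: "rat_cong (\<Sum>k=1..p-1. harm k 2 / of_nat k ^ 2) 0 p"
proof -
  have "rat_cong (harm (p - 1) 2 ^ 2 + harm (p - 1) 4) 0 p"
    by (intro rat_cong_0_add[OF prime_p] harm_p_minus_1_power_cong_0 harm_p_minus_1_cong_0) simp_all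
  then have "rat_cong (of_int 2 * (\<Sum>k=1..p-1. harm k 2 / of_nat k ^ 2)) 0 p"
    using sum_harm2_div2[of "p - 1"] by simp
  then show ?thesis using not_dvd_2 by (rule rat_cong_0_cancel[OF prime_p])
qed

text \<open>\<open>\<Sum> (H_k^2 + H(k,2))/(2k^2) \<equiv> 0\<close>: its binomial transform at \<open>p-1\<close> is
  \<open>\<Sum> H(k,3)/k \<equiv> 0\<close> and congruent to its negative.\<close>
lemma sum_harm_square_div2_cong_0:
  "rat_cong (\<Sum>k=1..p-1. (harm k 1 ^ 2 + harm k 2) / 2 / of_nat k ^ 2) 0 p"
proof -
  define G where "G k = (harm k 1 ^ 2 + harm k 2) / 2 / (of_nat k :: rat) ^ 2" for k
  have "rat_cong (binomial_transform G (p - 1) + (\<Sum>k=1..p-1. G k)) 0 p"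
  proof (rule binomial_transform_cong[OF prime_p])
    fix k assume "k \<in> {1..p-1}"
    then have k: "0 < k" "k < p" by auto
    have "p_integral p ((harm k 1 ^ 2 + harm k 2) * (1 / of_int 2) / of_nat k ^ 2)"
      using k not_dvd_2
      by (intro p_integral_divide_power[OF prime_p] p_integral_mult[OF prime_p]
          p_integral_add[OF prime_p] p_integral_power[OF prime_p]
          p_integral_harm[OF prime_p] p_integral_inverse_int[OF prime_p])
    then show "p_integral p (G k)" unfolding G_def by simp
  qed
  moreover have "binomial_transform G (p - 1) = (\<Sum>k=1..p-1. harm k 3 / of_nat k)"
    unfolding G_def by (rule binomial_transform_harm_square)
  ultimately have "rat_cong (binomial_transform G (p - 1) + (\<Sum>k=1..p-1. G k)
      - binomial_transform G (p - 1)) 0 p"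
    using sum_harm3_div_cong_0 by (intro rat_cong_0_diff[OF prime_p]) simp_all
  then show ?thesis unfolding G_def by simp
qed

text \<open>First claim: \<open>\<Sum> H_k^2/k^2 = 2 \<Sum> (H_k^2 + H(k,2))/(2k^2) - \<Sum> H(k,2)/k^2\<close>.\<close>
lemma sum_harm_sq_div_sq_cong_0: "rat_cong (\<Sum>k=1..p-1. harm k 1 ^ 2 / of_nat k ^ 2) 0 p"
proof -
  define G where "G = (\<Sum>k=1..p-1. (harm k 1 ^ 2 + harm k 2) / 2 / (of_nat k :: rat) ^ 2)"
  define Q where "Q = (\<Sum>k=1..p-1. harm k 2 / (of_nat k :: rat) ^ 2)"
  have "(\<Sum>k=1..p-1. harm k 1 ^ 2 / of_nat k ^ 2) = 2 * G - Q"
    unfolding G_def Q_def sum_distrib_left sum_subtractf[symmetric]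
    by (simp add: add_divide_distrib)
  moreover have "rat_cong (2 * G - Q) 0 p"
    unfolding G_def Q_def using p_integral_of_nat[OF prime_p, of 2]
    by (intro rat_cong_0_diff[OF prime_p] rat_cong_0_mult[OF prime_p]
        sum_harm_square_div2_cong_0 sum_harm2_div2_cong_0) simp_all
  ultimately show ?thesis by simp
qed

text \<open>Second claim, from
  \<open>\<Sum> H^2/k^2 + 2 \<Sum> H H(k,2)/k - 2 \<Sum> H/k^3 - \<Sum> H(k,2)/k^2 = H^2 H(p-1,2) - H(p-1,4)\<close>.\<close>
lemma sum_harm_harm2_div_cong_0: "rat_cong (\<Sum>k=1..p-1. harm k 1 * harm k 2 / of_nat k) 0 p"
proof -
  define S where "S = (\<Sum>k=1..p-1. harm k 1 * harm k 2 / (of_nat k :: rat))"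
  define S1 where "S1 = (\<Sum>k=1..p-1. harm k 1 ^ 2 / (of_nat k :: rat) ^ 2)"
  define A where "A = (\<Sum>k=1..p-1. harm k 1 / (of_nat k :: rat) ^ 3)"
  define Q where "Q = (\<Sum>k=1..p-1. harm k 2 / (of_nat k :: rat) ^ 2)"
  have "2 * S = harm (p - 1) 1 ^ 2 * harm (p - 1) 2 - harm (p - 1) 4 - S1 + 2 * A + Q"
    using sum_harm_harm2_div[of "p - 1"] unfolding S_def S1_def A_def Q_def by linarith
  moreover have "rat_cong (harm (p - 1) 1 ^ 2 * harm (p - 1) 2 - harm (p - 1) 4 - S1 + 2 * A + Q) 0 p"
    unfolding S1_def A_def Q_def using p_integral_of_nat[OF prime_p, of 2]
    by (intro rat_cong_0_add[OF prime_p] rat_cong_0_diff[OF prime_p] rat_cong_0_mult[OF prime_p]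
        harm_p_minus_1_power_cong_0 harm_p_minus_1_cong_0 p_integral_harm_p_minus_1
        sum_harm_sq_div_sq_cong_0 sum_harm_div_cube_cong_0 sum_harm2_div2_cong_0) simp_all
  ultimately have "rat_cong (of_int 2 * S) 0 p" by simp
  then show ?thesis unfolding S_def using not_dvd_2 by (rule rat_cong_0_cancel[OF prime_p])
qed

text \<open>Third claim, from
  \<open>4 \<Sum> H^3/k - 6 \<Sum> H^2/k^2 + 4 \<Sum> H/k^3 = H(p-1)^4 + H(p-1,4)\<close>.\<close>
lemma sum_harm_cube_div_cong_0: "rat_cong (\<Sum>k=1..p-1. harm k 1 ^ 3 / of_nat k) 0 p"
proof -
  define S where "S = (\<Sum>k=1..p-1. harm k 1 ^ 3 / (of_nat k :: rat))"
  define S1 where "S1 = (\<Sum>k=1..p-1. harm k 1 ^ 2 / (of_nat k :: rat) ^ 2)"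
  define A where "A = (\<Sum>k=1..p-1. harm k 1 / (of_nat k :: rat) ^ 3)"
  have "4 * S = harm (p - 1) 1 ^ 4 + harm (p - 1) 4 + 6 * S1 - 4 * A"
    using sum_harm_cube_div[of "p - 1"] unfolding S_def S1_def A_def by linarith
  moreover have "rat_cong (harm (p - 1) 1 ^ 4 + harm (p - 1) 4) 0 p"
    by (intro rat_cong_0_add[OF prime_p] harm_p_minus_1_power_cong_0 harm_p_minus_1_cong_0) simp_all
  moreover have "rat_cong (6 * S1) 0 p" "rat_cong (4 * A) 0 p"
    unfolding S1_def A_def using p_integral_of_nat[OF prime_p, of 6] p_integral_of_nat[OF prime_p, of 4]
    by (intro rat_cong_0_mult[OF prime_p] sum_harm_sq_div_sq_cong_0 sum_harm_div_cube_cong_0; simp)+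
  ultimately have "rat_cong (4 * S) 0 p"
    by (metis rat_cong_0_add[OF prime_p] rat_cong_0_diff[OF prime_p])
  then have "rat_cong (of_int 4 * S) 0 p" by simp
  then show ?thesis
    unfolding S_def by (rule rat_cong_0_cancel[OF prime_p]) (simp add: not_dvd_denominators)
qed

end

theorem lemma2p9:
  fixes p :: nat
  assumes "prime p" and "p \<ge> 7"
  shows "rat_cong (\<Sum>k=1..p-1. (harm k 1)^2 / (of_nat k)^2) 0 p
       \<and> rat_cong (\<Sum>k=1..p-1. harm k 1 * harm k 2 / of_nat k) 0 p
       \<and> rat_cong (\<Sum>k=1..p-1. (harm k 1)^3 / of_nat k) 0 p"
  using sum_harm_sq_div_sq_cong_0[OF assms] sum_harm_harm2_div_cong_0[OF assms]
    sum_harm_cube_div_cong_0[OF assms]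
  by blast

end
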